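(* Let $p$ be a prime and let $(r,e,d)$ be integers such that both $(r,e,d)$ and $(r,e+1,d)$ lie in $\mathscr{B}_0(p)$ (so $d=r-1$). Let $L$ be the $d\times(r+d)$ matrix with $(i,j)$ entry $c_{ip+j-2r}$ ($1\le i\le d$, $1\le j\le r+d$) and $V$ the $(r+d)\times d$ matrix with $(i,j)$ entry $s_{i-j}$ ($1\le i\le r+d$, $1\le j\le d$). Then $LV=M_d(f(x)^{e+1})$.
   Context: $\mathscr{B}_0(p)$ is the set of integer triples $(r,e,d)$ with $2\le r\le p+1$, $(p-1)/2<e\le p-1$, $r(p-1-e)\le p-1$, $d=r-1$. $s_1,\dots,s_r$ are independent indeterminates over $\mathbb{F}_p$, $f(x)=x^r+s_1x^{r-1}+\cdots+s_r$, with the conventions $s_0=1$ and $s_i=0$ for $i<0$ or $i>r$. Write $f(x)^e=\sum_i c_ix^i$ ($c_i=0$ for $i<0$). For $k\ge0$, $M_d(f(x)^{k})$ is the $d\times d$ matrix whose $(i,j)$ entry is the coefficient of $x^{ip+j-d-1}$ in $f(x)^{k}$. *)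

theory Defs
  imports "HOL-Computational_Algebra.Computational_Algebra"
begin

text \<open>The set B_0(p) of integer triples (r,e,d).  The condition (p-1)/2 < e is over the
rationals, i.e. p - 1 < 2 e.\<close>
definition B0 :: "nat \<Rightarrow> int \<Rightarrow> int \<Rightarrow> int \<Rightarrow> bool" where
  "B0 p r e d \<longleftrightarrow> 2 \<le> r \<and> r \<le> int p + 1 \<and> int p - 1 < 2 * e \<and> e \<le> int p - 1
     \<and> r * (int p - 1 - e) \<le> int p - 1 \<and> d = r - 1"

definition sx :: "int \<Rightarrow> (nat \<Rightarrow> 'a::comm_ring_1) \<Rightarrow> int \<Rightarrow> 'a" where
  "sx r s i = (if i = 0 then 1 else if 1 \<le> i \<and> i \<le> r then s (nat i) else 0)"

definition fpoly :: "int \<Rightarrow> (nat \<Rightarrow> 'a::comm_ring_1) \<Rightarrow> 'a poly" where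
  "fpoly r s = (\<Sum>t\<le>nat r. monom (sx r s (int t)) (nat r - t))"

definition icoeff :: "'a::zero poly \<Rightarrow> int \<Rightarrow> 'a" where
  "icoeff q i = (if i < 0 then 0 else coeff q (nat i))"

text \<open>M_d(q): (i,j) entry is the coefficient of x^(ip+j-d-1) in q (1-indexed).\<close>
definition Md :: "nat \<Rightarrow> int \<Rightarrow> 'a::zero poly \<Rightarrow> int \<Rightarrow> int \<Rightarrow> 'a" where
  "Md p d q i j = icoeff q (i * int p + j - d - 1)"

end

theory Submission
  imports Defs
begin

text \<open>The \<open>(i,k)\<close> entry of \<open>L V\<close> is \<open>\<Sum>\<^sub>j c(ip + j - 2r) s(j - k)\<close>, a convolution
  of the coefficients of \<open>f^e\<close> with those of \<open>f\<close>.  Since \<open>s(m)\<close> vanishes outside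
  \<open>0 \<le> m \<le> r\<close> and \<open>1 \<le> k \<le> r - 1\<close>, the window \<open>1 \<le> j \<le> 2r - 1\<close> covers the whole support
  of \<open>j \<mapsto> s(j - k)\<close>, so the sum is the coefficient of \<open>x^(ip + k - r)\<close> in \<open>f^e f = f^(e+1)\<close>.\<close>

lemma sx_eq_0_outside:
  assumes "r \<ge> 0" and "m \<notin> {0..r}"
  shows "sx r s m = 0"
  using assms by (auto simp: sx_def)

lemma icoeff_mult_monom:
  fixes g :: "'a::comm_ring_1 poly"
  shows "icoeff (g * monom c k) n = icoeff g (n - int k) * c"
  unfolding icoeff_def
  by (auto simp: mult.commute[of g] coeff_monom_mult nat_diff_distrib)

lemma icoeff_mult_fpoly:
  fixes g :: "'a::comm_ring_1 poly"
  assumes "r \<ge> 0"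
  shows "icoeff (g * fpoly r s) n = (\<Sum>m\<in>{0..r}. icoeff g (n - r + m) * sx r s m)"
proof -
  have "icoeff (g * fpoly r s) n = (\<Sum>t\<le>nat r. icoeff (g * monom (sx r s (int t)) (nat r - t)) n)"
    unfolding fpoly_def sum_distrib_left icoeff_def by (simp add: coeff_sum)
  also have "\<dots> = (\<Sum>t\<le>nat r. icoeff g (n - r + int t) * sx r s (int t))"
    using assms by (intro sum.cong) (auto simp: icoeff_mult_monom of_nat_diff algebra_simps)
  also have "\<dots> = (\<Sum>m\<in>int ` {..nat r}. icoeff g (n - r + m) * sx r s m)"
    by (simp add: sum.reindex)
  also have "int ` {..nat r} = {0..r}"
    using assms by (auto simp: image_iff intro!: bexI[of _ "nat _"])
  finally show ?thesis .
qed

lemma icoeff_mult_fpoly_window: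
  fixes g :: "'a::comm_ring_1 poly"
  assumes "r \<ge> 0" and "a \<le> k" and "k + r \<le> b"
  shows "icoeff (g * fpoly r s) n = (\<Sum>j\<in>{a..b}. icoeff g (n - r - k + j) * sx r s (j - k))"
proof -
  have "(\<Sum>j\<in>{a..b}. icoeff g (n - r - k + j) * sx r s (j - k))
      = (\<Sum>m\<in>(\<lambda>j. j - k) ` {a..b}. icoeff g (n - r + m) * sx r s m)"
    by (subst sum.reindex) (auto simp: inj_on_def algebra_simps)
  also have "\<dots> = (\<Sum>m\<in>{0..r}. icoeff g (n - r + m) * sx r s m)"
    using assms by (intro sum.mono_neutral_right) (auto simp: sx_eq_0_outside)
  finally show ?thesis
    using assms(1) by (simp add: icoeff_mult_fpoly)
qed

theorem lemma10:
  fixes p :: nat and r e d :: int and s :: "nat \<Rightarrow> 'a::comm_ring_1"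
  assumes "prime p" and "CHAR('a) = p"
    and "B0 p r e d" and "B0 p r (e + 1) d"
  shows "\<forall>i\<in>{1..d}. \<forall>k\<in>{1..d}.
           (\<Sum>j\<in>{1..r + d}. icoeff (fpoly r s ^ nat e) (i * int p + j - 2 * r) * sx r s (j - k))
           = Md p d (fpoly r s ^ nat (e + 1)) i k"
proof (intro ballI)
  fix i k assume "i \<in> {1..d}" and k: "k \<in> {1..d}"
  have r: "r \<ge> 2" and d: "d = r - 1" and e: "e \<ge> 0"
    using assms(3) unfolding B0_def by auto
  have power: "fpoly r s ^ nat (e + 1) = fpoly r s ^ nat e * fpoly r s"
    using e by (simp add: nat_add_distrib)
  have "Md p d (fpoly r s ^ nat (e + 1)) i k = icoeff (fpoly r s ^ nat e * fpoly r s) (i * int p + k - r)"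
    unfolding Md_def power d by (simp add: algebra_simps)
  also have "\<dots> = (\<Sum>j\<in>{1..r + d}. icoeff (fpoly r s ^ nat e) (i * int p + j - 2 * r) * sx r s (j - k))"
    using r d k by (subst icoeff_mult_fpoly_window[where a = 1 and b = "r + d" and k = k])
      (auto simp: algebra_simps)
  finally show "(\<Sum>j\<in>{1..r + d}. icoeff (fpoly r s ^ nat e) (i * int p + j - 2 * r) * sx r s (j - k))
      = Md p d (fpoly r s ^ nat (e + 1)) i k" ..
qed

end
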